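(* There exists a probability distribution $\mu$ (on $\mathbb{R}_+$) such that $\mu\in\mathcal{S}_{loc}\setminus\mathcal{US}_{loc}$ and $\mu^{2*}\in\mathcal{S}_{ac}$.
   Context: For positive functions $f,g$ defined on some $[a,\infty)$, $f(x)\sim g(x)$ means $\lim_{x\to\infty}f(x)/g(x)=1$. A density function is a measurable $g:\mathbb{R}\to[0,\infty)$ with $\int g=1$. For integrable $f,g$, $f\otimes g(x):=\int f(x-u)g(u)\,du$; $\eta*\rho$ denotes convolution of measures and $\rho^{n*}$ the $n$-th convolution power. The class $\mathbf{L}$ consists of nonnegative measurable $g$ on $\mathbb{R}$ with $g(x)>0$ for all sufficiently large $x$ and $g(x+a)\sim g(x)$ for every $a\in\mathbb{R}$. $\mathcal{L}_d$ is the set of density functions in $\mathbf{L}$; $\mathcal{S}_d$ is the set of $g\in\mathcal{L}_d$ with $g\otimes g(x)\sim 2g(x)$. $\mathcal{S}_{ac}$ is the class of distributions $\rho(dx)=g(x)dx$ with $g\in\mathcal{S}_d$. For $\Delta=(0,c]$, $c>0$: a distribution $\rho$ belongs to $\mathcal{L}_\Delta$ if $x\mapsto\rho((x,x+c])$ belongs to $\mathbf{L}$, and to $\mathcal{S}_\Delta$ if moreover $\rho*\rho((x,x+c])\sim 2\rho((x,x+c])$. $\mathcal{L}_{loc}$ (resp. $\mathcal{S}_{loc}$) is the class of distributions in $\mathcal{L}_\Delta$ (resp. $\mathcal{S}_\Delta$) for every $\Delta=(0,c]$, $c>0$. $\mathcal{UL}_{loc}$ is the class of $\rho\in\mathcal{L}_{loc}$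 for which there is $p\in\mathcal{L}_d$ with $c^{-1}\rho((x-c,x])\sim p(x)$ uniformly in $c\in(0,1]$; $\mathcal{US}_{loc}$ is the class of $\rho\in\mathcal{S}_{loc}$ for which there is $p\in\mathcal{S}_d$ with $c^{-1}\rho((x-c,x])\sim p(x)$ uniformly in $c\in(0,1]$. *)

theory Defs
  imports "HOL-Probability.Probability" "HOL-Library.Landau_Symbols"
begin

definition distribution :: "real measure \<Rightarrow> bool" where
  "distribution \<rho> \<longleftrightarrow> prob_space \<rho> \<and> sets \<rho> = sets borel"

definition classL :: "(real \<Rightarrow> real) set" where
  "classL = {g. g \<in> borel_measurable borel \<and> (\<forall>x. 0 \<le> g x)
              \<and> (\<forall>\<^sub>F x in at_top. g x > 0)
              \<and> (\<forall>a::real. (\<lambda>x. g (x + a)) \<sim>[at_top] g)}"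

definition density_fun :: "(real \<Rightarrow> real) \<Rightarrow> bool" where
  "density_fun g \<longleftrightarrow> g \<in> borel_measurable borel \<and> (\<forall>x. 0 \<le> g x)
      \<and> (\<integral>\<^sup>+ x. ennreal (g x) \<partial>lborel) = 1"

definition conv_fun :: "(real \<Rightarrow> real) \<Rightarrow> (real \<Rightarrow> real) \<Rightarrow> real \<Rightarrow> real" where
  "conv_fun f g x = (\<integral> u. f (x - u) * g u \<partial>lborel)"

definition Ld :: "(real \<Rightarrow> real) set" where
  "Ld = {g. density_fun g \<and> g \<in> classL}"

definition Sd :: "(real \<Rightarrow> real) set" where
  "Sd = {g. g \<in> Ld \<and> conv_fun g g \<sim>[at_top] (\<lambda>x. 2 * g x)}"

definition S_ac :: "real measure set" where
  "S_ac = {\<rho>. distribution \<rho> \<and> (\<exists>g\<in>Sd. \<rho> = density lborel (\<lambda>x. ennreal (g x)))}"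

definition L_Delta :: "real \<Rightarrow> real measure set" where
  "L_Delta c = {\<rho>. distribution \<rho> \<and> (\<lambda>x. measure \<rho> {x<..x+c}) \<in> classL}"

definition S_Delta :: "real \<Rightarrow> real measure set" where
  "S_Delta c = {\<rho>. \<rho> \<in> L_Delta c \<and>
      (\<lambda>x. measure (\<rho> \<star> \<rho>) {x<..x+c}) \<sim>[at_top] (\<lambda>x. 2 * measure \<rho> {x<..x+c})}"

definition L_loc :: "real measure set" where
  "L_loc = {\<rho>. \<forall>c>0. \<rho> \<in> L_Delta c}"

definition S_loc :: "real measure set" where
  "S_loc = {\<rho>. \<forall>c>0. \<rho> \<in> S_Delta c}"

definition unif_local_asymp :: "real measure \<Rightarrow> (real \<Rightarrow> real) \<Rightarrow> bool" where
  "unif_local_asymp \<rho> p \<longleftrightarrow>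
     (\<forall>e>0. \<forall>\<^sub>F x in at_top. \<forall>c\<in>{0<..1}.
        \<bar>(measure \<rho> {x-c<..x} / c) / p x - 1\<bar> < e)"

definition UL_loc :: "real measure set" where
  "UL_loc = {\<rho>. \<rho> \<in> L_loc \<and> (\<exists>p\<in>Ld. unif_local_asymp \<rho> p)}"

definition US_loc :: "real measure set" where
  "US_loc = {\<rho>. \<rho> \<in> S_loc \<and> (\<exists>p\<in>Sd. unif_local_asymp \<rho> p)}"

end

theory Submission
  imports Defs "HOL-Real_Asymp.Real_Asymp"
begin

text \<open>The witness has density proportional to \<open>1 / (1 + x)^2\<close> plus the indicator of the
  spikes \<open>(n + 1, n + 1 + 2^-(n+1)]\<close>. The spikes beyond \<open>x\<close> carry exponentially small total mass,
  so windows \<open>(x, x + c]\<close> of fixed length, and the convolution square, only see the reference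
  density \<open>1 / (1 + x)^2\<close>, which is long-tailed and dominatedly varying; splitting the convolution
  integral at \<open>x / 2\<close> and applying dominated convergence to each half gives the subexponential
  asymptotics. A window that fits exactly on a far spike, however, has mass per unit length at
  least the height of the spikes, while unit windows have vanishing mass, so no density describes
  \<open>\<mu>((x - c, x]) / c\<close> uniformly in \<open>c \<in> (0, 1]\<close>.\<close>

lemma asymp_equiv_double_if_ratios_tendsto:
  fixes W V p :: "real \<Rightarrow> real"
  assumes W: "((\<lambda>x. W x / p x) \<longlongrightarrow> 2 * L) at_top"
    and V: "((\<lambda>x. V x / p x) \<longlongrightarrow> L) at_top" and "L \<noteq> 0"
  shows "W \<sim>[at_top] (\<lambda>x. 2 * V x)"
proof (rule asymp_equivI'_const)
  have "eventually (\<lambda>x. V x / p x \<noteq> 0) at_top"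
    using tendsto_imp_eventually_ne[OF V \<open>L \<noteq> 0\<close>] .
  then have "eventually (\<lambda>x. (W x / p x) / (V x / p x) = W x / V x) at_top"
    by eventually_elim auto
  moreover have "((\<lambda>x. (W x / p x) / (V x / p x)) \<longlongrightarrow> 2 * L / L) at_top"
    by (intro tendsto_divide W V \<open>L \<noteq> 0\<close>)
  ultimately show "((\<lambda>x. W x / V x) \<longlongrightarrow> 2) at_top"
    using \<open>L \<noteq> 0\<close> by (simp add: Lim_transform_eventually)
qed simp

lemma measure_density_eq_integral:
  fixes F :: "real \<Rightarrow> real"
  assumes [measurable]: "F \<in> borel_measurable borel" "A \<in> sets borel" and "\<And>x. 0 \<le> F x"
  shows "measure (density lborel F) A = (\<integral>v. F v * indicator A v \<partial>lborel)"
proof -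
  have "measure (density lborel F) A = enn2real (\<integral>\<^sup>+x. ennreal (F x) * indicator A x \<partial>lborel)"
    by (simp add: measure_def emeasure_density)
  also have "\<dots> = (\<integral>v. F v * indicator A v \<partial>lborel)"
    by (rule enn2real_nn_integral_eq_integral) (auto simp: assms indicator_def)
  finally show ?thesis .
qed

lemma borel_measurable_measure_Ioc_window:
  fixes M :: "real measure"
  assumes "finite_measure M" "sets M = sets borel" "0 \<le> c"
  shows "(\<lambda>x. measure M {x<..x + c}) \<in> borel_measurable borel"
proof -
  interpret finite_measure M by fact
  define F where "F y = measure M {..y}" for y :: real
  have "mono F"
    unfolding F_def mono_def by (intro allI impI finite_measure_mono) (auto simp: assms)
  then have [measurable]: "F \<in> borel_measurable borel" by (rule borel_measurable_mono)
  have "{x<..x + c} = {..x + c} - {..x}" for x by auto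
  then have "measure M {x<..x + c} = F (x + c) - F x" for x
    unfolding F_def using assms by (simp add: finite_measure_Diff)
  moreover have "(\<lambda>x. F (x + c) - F x) \<in> borel_measurable borel" by measurable
  ultimately show ?thesis by simp
qed

lemma prob_space_convolution:
  assumes "prob_space M" "prob_space N" "sets M = sets borel" "sets N = sets borel"
  shows "prob_space (M \<star> N :: real measure)"
proof -
  interpret pair_prob_space M N
    using assms by (simp add: pair_prob_space_def pair_sigma_finite_def prob_space_imp_sigma_finite)
  have "(\<lambda>(x::real, y). x + y) \<in> borel_measurable (borel \<Otimes>\<^sub>M borel)" by measurable
  then have "(\<lambda>(x, y). x + y) \<in> borel_measurable (M \<Otimes>\<^sub>M N)"
    by (simp add: measurable_cong_sets[OF sets_pair_measure_cong[OF assms(3,4)] refl])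
  then show ?thesis unfolding convolution_def by (rule prob_space_distr)
qed

lemma conv_fun_self_split_half:
  fixes F :: "real \<Rightarrow> real"
  assumes [measurable]: "F \<in> borel_measurable borel"
    and int: "integrable lborel (\<lambda>u. F (x - u) * F u)"
  shows "conv_fun F F x = (\<integral>u. F (x - u) * F u * indicator {..x/2} u \<partial>lborel)
        + (\<integral>u. F (x - u) * F u * indicator {..<x/2} u \<partial>lborel)"
proof -
  have "conv_fun F F x = (\<integral>u. F (x - u) * F u * indicator {..x/2} u
        + F (x - u) * F u * indicator {x/2<..} u \<partial>lborel)"
    unfolding conv_fun_def by (intro Bochner_Integration.integral_cong) (auto simp: indicator_def)
  also have "\<dots> = (\<integral>u. F (x - u) * F u * indicator {..x/2} u \<partial>lborel)
        + (\<integral>u. F (x - u) * F u * indicator {x/2<..} u \<partial>lborel)"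
    using integrable_mult_indicator[OF _ int, of "{..x/2}"]
      integrable_mult_indicator[OF _ int, of "{x/2<..}"]
    by (intro Bochner_Integration.integral_add) (simp_all add: mult.commute)
  also have "(\<integral>u. F (x - u) * F u * indicator {x/2<..} u \<partial>lborel)
      = (\<integral>u. F (x - u) * F u * indicator {..<x/2} u \<partial>lborel)"
    using lborel_integral_real_affine[of "-1" "\<lambda>u. F (x - u) * F u * indicator {x/2<..} u" x]
    by (simp add: indicator_def mult.commute)
  finally show ?thesis .
qed

lemma unif_local_asymp_imp_window_ratio_bound:
  assumes "unif_local_asymp \<rho> p"
  shows "\<forall>\<^sub>F x in at_top. \<forall>c\<in>{0<..1}. measure \<rho> {x - c<..x} / c < 3 * measure \<rho> {x - 1<..x}"
proof -
  have "\<forall>e>0. \<forall>\<^sub>F x in at_top. \<forall>c\<in>{0<..1}. \<bar>(measure \<rho> {x - c<..x} / c) / p x - 1\<bar> < e"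
    using assms unfolding unif_local_asymp_def .
  then have "\<forall>\<^sub>F x in at_top. \<forall>c\<in>{0<..1}. \<bar>(measure \<rho> {x - c<..x} / c) / p x - 1\<bar> < 1/2"
    by (rule allE[where x="1/2"]) simp
  then show ?thesis
  proof eventually_elim
    case (elim x)
    have one: "\<bar>measure \<rho> {x - 1<..x} / p x - 1\<bar> < 1/2" using elim[rule_format, of 1] by simp
    have px: "0 < p x"
    proof (rule ccontr)
      assume "\<not> 0 < p x"
      then have "measure \<rho> {x - 1<..x} / p x \<le> 0" by (simp add: divide_nonneg_nonpos)
      with one show False by linarith
    qed
    show ?case
    proof
      fix c :: real assume "c \<in> {0<..1}"
      then have "\<bar>(measure \<rho> {x - c<..x} / c) / p x - 1\<bar> < 1/2" using elim by blast
      then have "(measure \<rho> {x - c<..x} / c) / p x < 3/2" by (simp only: abs_less_iff) linarith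
      then have "measure \<rho> {x - c<..x} / c < 3/2 * p x" using pos_divide_less_eq[OF px] by (simp only:)
      moreover have "1/2 < measure \<rho> {x - 1<..x} / p x" using one by (simp only: abs_less_iff) linarith
      then have "1/2 * p x < measure \<rho> {x - 1<..x}" using px by (simp add: pos_less_divide_eq)
      ultimately show "measure \<rho> {x - c<..x} / c < 3 * measure \<rho> {x - 1<..x}" by linarith
    qed
  qed
qed

section \<open>Asymptotics relative to a long-tailed, dominatedly varying function\<close>

locale dominated_long_tailed =
  fixes p :: "real \<Rightarrow> real" and D :: real
  assumes pos: "0 \<le> x \<Longrightarrow> 0 < p x"
    and antimono: "0 \<le> x \<Longrightarrow> x \<le> y \<Longrightarrow> p y \<le> p x"
    and shift_ratio: "((\<lambda>x. p (x + b) / p x) \<longlongrightarrow> 1) at_top"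
    and doubling: "0 \<le> x \<Longrightarrow> p (x / 2) \<le> D * p x"
begin

lemma le_const_mult_if_le_half: "0 \<le> x \<Longrightarrow> u \<le> x / 2 \<Longrightarrow> p (x - u) \<le> D * p x"
  using antimono[of "x / 2" "x - u"] doubling[of x] by simp

lemma ratio_tendsto_shift:
  assumes "((\<lambda>y. q y / p y) \<longlongrightarrow> a) at_top"
  shows "((\<lambda>x. q (x + b) / p x) \<longlongrightarrow> a) at_top"
proof -
  have "filterlim (\<lambda>x::real. x + b) at_top at_top" by real_asymp
  from filterlim_compose[OF assms this]
  have "((\<lambda>x. q (x + b) / p (x + b) * (p (x + b) / p x)) \<longlongrightarrow> a * 1) at_top"
    by (intro tendsto_mult shift_ratio) simp
  moreover have "\<forall>\<^sub>F x in at_top. q (x + b) / p (x + b) * (p (x + b) / p x) = q (x + b) / p x"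
    using eventually_ge_at_top[of "max 0 (- b)"]
  proof eventually_elim
    case (elim x)
    then have "0 < p (x + b)" by (intro pos) simp
    then show ?case by simp
  qed
  ultimately show ?thesis by (simp add: Lim_transform_eventually)
qed

lemma le_multiple_if_ratio_tendsto:
  assumes q: "\<And>y. 0 \<le> q y" "\<And>y. q y \<le> M" and lim: "((\<lambda>y. q y / p y) \<longlongrightarrow> a) at_top"
  obtains C where "0 \<le> C" "\<And>y. 0 \<le> y \<Longrightarrow> q y \<le> C * p y"
proof -
  obtain X where X: "\<And>y. X \<le> y \<Longrightarrow> q y / p y < a + 1"
    using order_tendstoD(2)[OF lim, of "a + 1"] by (auto simp: eventually_at_top_linorder)
  define X' where "X' = max X 0"
  define C where "C = max (a + 1) (M / p X')"
  have pX: "0 < p X'" unfolding X'_def by (simp add: pos)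
  have "q y \<le> C * p y" if y: "0 \<le> y" for y
  proof (cases "X' \<le> y")
    case True
    then have "q y / p y < a + 1" using X unfolding X'_def by simp
    then have "q y \<le> (a + 1) * p y" using pos[OF y] by (simp add: divide_less_eq)
    also have "\<dots> \<le> C * p y" unfolding C_def using pos[OF y] by (intro mult_right_mono) auto
    finally show ?thesis .
  next
    case False
    have "q y \<le> M / p X' * p X'" using q(2)[of y] pX by simp
    also have "\<dots> \<le> M / p X' * p y"
      using False y q(1)[of 0] q(2)[of 0] pX by (intro mult_left_mono antimono) auto
    also have "\<dots> \<le> C * p y" unfolding C_def using pos[OF y] by (intro mult_right_mono) auto
    finally show ?thesis .
  qed
  moreover have "0 \<le> C" unfolding C_def using q(1)[of 0] q(2)[of 0] pX by (intro max.coboundedI2) simp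
  ultimately show ?thesis using that by blast
qed

lemma doubling_const_nonneg: "0 \<le> D"
  using doubling[of 0] pos[of 0] by (simp add: zero_le_mult_iff)

lemma classL_if_ratio_tendsto:
  assumes "W \<in> borel_measurable borel" "\<And>x. 0 \<le> W x"
    and lim: "((\<lambda>x. W x / p x) \<longlongrightarrow> L) at_top" and "0 < L"
  shows "W \<in> classL"
proof -
  have "\<forall>\<^sub>F x in at_top. 0 < W x / p x" using order_tendstoD(1)[OF lim \<open>0 < L\<close>] .
  then have W_pos: "\<forall>\<^sub>F x in at_top. 0 < W x"
    by eventually_elim (metis assms(2) zero_less_divide_iff not_less)
  have "(\<lambda>x. W (x + b)) \<sim>[at_top] W" for b
  proof (rule asymp_equivI')
    have "((\<lambda>x. (W (x + b) / p x) / (W x / p x)) \<longlongrightarrow> L / L) at_top"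
      using \<open>0 < L\<close> by (intro tendsto_divide ratio_tendsto_shift lim) auto
    moreover have "\<forall>\<^sub>F x in at_top. (W (x + b) / p x) / (W x / p x) = W (x + b) / W x"
      using eventually_ge_at_top[of 0]
    proof eventually_elim
      case (elim x)
      then show ?case using pos[OF elim] by simp
    qed
    ultimately show "((\<lambda>x. W (x + b) / W x) \<longlongrightarrow> 1) at_top"
      using \<open>0 < L\<close> by (simp add: Lim_transform_eventually)
  qed
  then show ?thesis unfolding classL_def using assms W_pos by auto
qed

lemma half_conv_ratio_tendsto:
  fixes q h :: "real \<Rightarrow> real" and S :: "real \<Rightarrow> real set"
  assumes [measurable]: "q \<in> borel_measurable borel" "h \<in> borel_measurable borel"
      "\<And>x. S x \<in> sets borel"
    and q: "\<And>y. 0 \<le> q y" "\<And>y. q y \<le> M" and lim: "((\<lambda>y. q y / p y) \<longlongrightarrow> a) at_top"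
    and h: "integrable lborel h"
    and S: "\<And>x u. u \<in> S x \<Longrightarrow> u \<le> x / 2" "\<And>u. \<forall>\<^sub>F x in at_top. u \<in> S x"
  shows "((\<lambda>x. (\<integral>u. q (x - u) * h u * indicator (S x) u \<partial>lborel) / p x)
           \<longlongrightarrow> a * (\<integral>u. h u \<partial>lborel)) at_top"
proof -
  obtain C where C: "0 \<le> C" "\<And>y. 0 \<le> y \<Longrightarrow> q y \<le> C * p y"
    using le_multiple_if_ratio_tendsto[OF q lim] by blast
  have "((\<lambda>x. \<integral>u. q (x - u) * h u * indicator (S x) u / p x \<partial>lborel)
      \<longlongrightarrow> (\<integral>u. a * h u \<partial>lborel)) at_top"
  proof (rule integral_dominated_convergence_at_top[where w="\<lambda>u. C * D * norm (h u)"])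
    show "integrable lborel (\<lambda>u. C * D * norm (h u))" using h by simp
    show "AE u in lborel. ((\<lambda>x. q (x - u) * h u * indicator (S x) u / p x) \<longlongrightarrow> a * h u) at_top"
    proof (rule AE_I2)
      fix u
      have "((\<lambda>x. q (x + - u) / p x * h u) \<longlongrightarrow> a * h u) at_top"
        by (intro tendsto_mult ratio_tendsto_shift lim tendsto_const)
      moreover have "\<forall>\<^sub>F x in at_top. q (x + - u) / p x * h u = q (x - u) * h u * indicator (S x) u / p x"
        using S(2)[of u] by eventually_elim simp
      ultimately show "((\<lambda>x. q (x - u) * h u * indicator (S x) u / p x) \<longlongrightarrow> a * h u) at_top"
        by (simp add: Lim_transform_eventually)
    qed
    show "\<forall>\<^sub>F x in at_top. AE u in lborel.
        norm (q (x - u) * h u * indicator (S x) u / p x) \<le> C * D * norm (h u)"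
      using eventually_ge_at_top[of 0]
    proof eventually_elim
      case (elim x)
      show ?case
      proof (rule AE_I2)
        fix u
        show "norm (q (x - u) * h u * indicator (S x) u / p x) \<le> C * D * norm (h u)"
        proof (cases "u \<in> S x")
          case True
          have "q (x - u) \<le> C * p (x - u)" using S(1)[OF True] elim by (intro C) simp
          also have "\<dots> \<le> C * (D * p x)"
            using le_const_mult_if_le_half[OF elim S(1)[OF True]] C(1) by (rule mult_left_mono)
          finally have "q (x - u) / p x \<le> C * D" using pos[OF elim] by (simp add: divide_le_eq)
          moreover have "norm (q (x - u) * h u * indicator (S x) u / p x) = q (x - u) / p x * norm (h u)"
            using True q(1)[of "x - u"] pos[OF elim] by (simp add: abs_mult)
          ultimately show ?thesis by (metis mult_right_mono norm_ge_zero)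
        qed (use C(1) doubling_const_nonneg in simp)
      qed
    qed
  qed measurable
  then show ?thesis by simp
qed

lemma half_conv_tail_ratio_tendsto:
  fixes r h :: "real \<Rightarrow> real" and S :: "real \<Rightarrow> real set"
  assumes [measurable]: "r \<in> borel_measurable borel" "h \<in> borel_measurable borel"
      "\<And>x. S x \<in> sets borel"
    and r: "\<And>y. 0 \<le> r y" "integrable lborel r" and h: "\<And>u. 0 \<le> h u" "\<And>u. h u \<le> M"
    and S: "\<And>x u. u \<in> S x \<Longrightarrow> u \<le> x / 2"
    and tail: "((\<lambda>x. (\<integral>v. r v * indicator {x/2..} v \<partial>lborel) / p x) \<longlongrightarrow> 0) at_top"
  shows "((\<lambda>x. (\<integral>u. r (x - u) * h u * indicator (S x) u \<partial>lborel) / p x) \<longlongrightarrow> 0) at_top"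
proof (rule tendsto_sandwich[where f="\<lambda>x. 0"
      and h="\<lambda>x. M * ((\<integral>v. r v * indicator {x/2..} v \<partial>lborel) / p x)"])
  show "\<forall>\<^sub>F x in at_top. 0 \<le> (\<integral>u. r (x - u) * h u * indicator (S x) u \<partial>lborel) / p x"
    using eventually_ge_at_top[of 0]
    by eventually_elim (auto intro!: divide_nonneg_pos integral_nonneg pos simp: r h)
  show "\<forall>\<^sub>F x in at_top. (\<integral>u. r (x - u) * h u * indicator (S x) u \<partial>lborel) / p x
      \<le> M * ((\<integral>v. r v * indicator {x/2..} v \<partial>lborel) / p x)"
    using eventually_ge_at_top[of 0]
  proof eventually_elim
    case (elim x)
    have r_refl: "integrable lborel (\<lambda>u. r (x - u))"
      using lborel_integrable_real_affine[OF r(2), of "-1" x] by simp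
    have "(\<integral>u. r (x - u) * h u * indicator (S x) u \<partial>lborel)
        \<le> (\<integral>u. M * (r (x - u) * indicator {..x/2} u) \<partial>lborel)"
    proof (rule integral_mono)
      show "integrable lborel (\<lambda>u. r (x - u) * h u * indicator (S x) u)"
        by (rule Bochner_Integration.integrable_bound[OF integrable_mult_right[OF r_refl, of M]])
           (use r h order.trans[OF h(1)[of 0] h(2)[of 0]] in
             \<open>auto intro!: AE_I2 mult_mono order.trans[OF _ abs_ge_self]
               simp: indicator_def abs_mult mult.commute\<close>)
      show "integrable lborel (\<lambda>u. M * (r (x - u) * indicator {..x/2} u))"
        using integrable_mult_indicator[OF _ r_refl, of "{..x/2}"] by (simp add: mult.commute)
      show "r (x - u) * h u * indicator (S x) u \<le> M * (r (x - u) * indicator {..x/2} u)" for u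
        using S[of u x] r(1)[of "x - u"] h[of u]
        by (auto simp: indicator_def mult.commute intro: mult_right_mono)
    qed
    also have "\<dots> = M * (\<integral>v. r v * indicator {x/2..} v \<partial>lborel)"
      using lborel_integral_real_affine[of "-1" "\<lambda>v. r v * indicator {x/2..} v" x]
      by (simp add: indicator_def)
    finally show ?case using pos[OF elim] by (simp add: divide_right_mono)
  qed
  show "((\<lambda>x. M * ((\<integral>v. r v * indicator {x/2..} v \<partial>lborel) / p x)) \<longlongrightarrow> 0) at_top"
    using tendsto_mult_right_zero[OF tail] .
qed simp

text \<open>\<open>F\<close> behaves like \<open>a \<cdot> p\<close> in the tail, up to a summand whose mass beyond \<open>x / 2\<close> is
  \<open>o(p x)\<close>; such a summand may be large at individual points.\<close>

definition tail_asymptotic :: "(real \<Rightarrow> real) \<Rightarrow> real \<Rightarrow> bool" where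
  "tail_asymptotic F a \<longleftrightarrow> (\<exists>q r M. F = (\<lambda>y. q y + r y) \<and>
     q \<in> borel_measurable borel \<and> r \<in> borel_measurable borel \<and>
     (\<forall>y. 0 \<le> q y \<and> 0 \<le> r y \<and> q y + r y \<le> M) \<and> integrable lborel q \<and> integrable lborel r \<and>
     ((\<lambda>y. q y / p y) \<longlongrightarrow> a) at_top \<and>
     ((\<lambda>x. (\<integral>v. r v * indicator {x/2..} v \<partial>lborel) / p x) \<longlongrightarrow> 0) at_top)"

lemma tail_asymptoticI:
  assumes "\<And>y. F y = q y + r y" "q \<in> borel_measurable borel" "r \<in> borel_measurable borel"
    and "\<And>y. 0 \<le> q y" "\<And>y. 0 \<le> r y" "\<And>y. q y + r y \<le> M"
    and "integrable lborel q" "integrable lborel r" "((\<lambda>y. q y / p y) \<longlongrightarrow> a) at_top"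
    and "((\<lambda>x. (\<integral>v. r v * indicator {x/2..} v \<partial>lborel) / p x) \<longlongrightarrow> 0) at_top"
  shows "tail_asymptotic F a"
  unfolding tail_asymptotic_def using assms by (intro exI[of _ q] exI[of _ r] exI[of _ M]) auto

lemma tail_asymptoticE:
  assumes "tail_asymptotic F a"
  obtains q r M where "F = (\<lambda>y. q y + r y)" "q \<in> borel_measurable borel" "r \<in> borel_measurable borel"
    "\<And>y. 0 \<le> q y" "\<And>y. 0 \<le> r y" "\<And>y. q y + r y \<le> M"
    "integrable lborel q" "integrable lborel r" "((\<lambda>y. q y / p y) \<longlongrightarrow> a) at_top"
    "((\<lambda>x. (\<integral>v. r v * indicator {x/2..} v \<partial>lborel) / p x) \<longlongrightarrow> 0) at_top"
  using assms unfolding tail_asymptotic_def by blast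

lemma tail_asymptotic_half_conv_ratio_tendsto:
  fixes S :: "real \<Rightarrow> real set"
  assumes F: "tail_asymptotic F a"
    and [measurable]: "\<And>x. S x \<in> sets borel"
    and S: "\<And>x u. u \<in> S x \<Longrightarrow> u \<le> x / 2" "\<And>u. \<forall>\<^sub>F x in at_top. u \<in> S x"
  shows "((\<lambda>x. (\<integral>u. F (x - u) * F u * indicator (S x) u \<partial>lborel) / p x)
           \<longlongrightarrow> a * (\<integral>u. F u \<partial>lborel)) at_top"
proof -
  obtain q r M where F_eq: "F = (\<lambda>y. q y + r y)" and [measurable]: "q \<in> borel_measurable borel"
      "r \<in> borel_measurable borel" and qr: "\<And>y. 0 \<le> q y" "\<And>y. 0 \<le> r y" "\<And>y. q y + r y \<le> M"
    and int: "integrable lborel q" "integrable lborel r" and lim: "((\<lambda>y. q y / p y) \<longlongrightarrow> a) at_top"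
    and tail: "((\<lambda>x. (\<integral>v. r v * indicator {x/2..} v \<partial>lborel) / p x) \<longlongrightarrow> 0) at_top"
    using tail_asymptoticE[OF F] by blast
  have [measurable]: "F \<in> borel_measurable borel" and F_int: "integrable lborel F"
    using int by (simp_all add: F_eq)
  have F_bounds: "0 \<le> F y" "F y \<le> M" for y using qr[of y] by (simp_all add: F_eq)
  have q_le: "q y \<le> M" and r_le: "r y \<le> M" for y using qr[of y] by linarith+
  have bounded_int: "integrable lborel (\<lambda>u. k (x - u) * F u * indicator (S x) u)"
    if [measurable]: "k \<in> borel_measurable borel" and k: "\<And>y. 0 \<le> k y" "\<And>y. k y \<le> M" for k x
    by (rule Bochner_Integration.integrable_bound[OF integrable_mult_right[OF F_int, of M]])
       (use k F_bounds in \<open>auto intro!: AE_I2 mult_right_mono order.trans[OF _ abs_ge_self]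
            simp: indicator_def abs_mult\<close>)
  have "(\<integral>u. F (x - u) * F u * indicator (S x) u \<partial>lborel) / p x
      = (\<integral>u. q (x - u) * F u * indicator (S x) u \<partial>lborel) / p x
        + (\<integral>u. r (x - u) * F u * indicator (S x) u \<partial>lborel) / p x" for x
    using bounded_int[of q x] bounded_int[of r x] qr q_le r_le
    by (simp add: F_eq distrib_right add_divide_distrib Bochner_Integration.integral_add)
  moreover have "((\<lambda>x. (\<integral>u. q (x - u) * F u * indicator (S x) u \<partial>lborel) / p x
        + (\<integral>u. r (x - u) * F u * indicator (S x) u \<partial>lborel) / p x)
      \<longlongrightarrow> a * (\<integral>u. F u \<partial>lborel) + 0) at_top"
    by (intro tendsto_add half_conv_ratio_tendsto[OF _ _ _ qr(1) q_le lim F_int S]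
        half_conv_tail_ratio_tendsto[OF _ _ _ qr(2) int(2) F_bounds S(1) tail]) simp_all
  ultimately show ?thesis by simp
qed

lemma tail_asymptotic_conv_ratio_tendsto:
  assumes F: "tail_asymptotic F a"
  shows "((\<lambda>x. conv_fun F F x / p x) \<longlongrightarrow> 2 * a * (\<integral>u. F u \<partial>lborel)) at_top"
proof -
  obtain q r M where "F = (\<lambda>y. q y + r y)" "q \<in> borel_measurable borel" "r \<in> borel_measurable borel"
    "\<And>y. 0 \<le> q y" "\<And>y. 0 \<le> r y" "\<And>y. q y + r y \<le> M" "integrable lborel q" "integrable lborel r"
    using tail_asymptoticE[OF F] by blast
  then have [measurable]: "F \<in> borel_measurable borel" and F_int: "integrable lborel F"
    and F_bounds: "\<And>y. 0 \<le> F y" "\<And>y. F y \<le> M"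
    by (auto intro: add_nonneg_nonneg)
  have "integrable lborel (\<lambda>u. F (x - u) * F u)" for x
    by (rule Bochner_Integration.integrable_bound[OF integrable_mult_right[OF F_int, of M]])
       (use F_bounds in \<open>auto intro!: AE_I2 mult_right_mono order.trans[OF _ abs_ge_self]
            simp: abs_mult\<close>)
  then have "conv_fun F F x / p x = (\<integral>u. F (x - u) * F u * indicator {..x/2} u \<partial>lborel) / p x
        + (\<integral>u. F (x - u) * F u * indicator {..<x/2} u \<partial>lborel) / p x" for x
    by (simp add: conv_fun_self_split_half add_divide_distrib)
  moreover have "((\<lambda>x. (\<integral>u. F (x - u) * F u * indicator {..x/2} u \<partial>lborel) / p x
        + (\<integral>u. F (x - u) * F u * indicator {..<x/2} u \<partial>lborel) / p x)
      \<longlongrightarrow> a * (\<integral>u. F u \<partial>lborel) + a * (\<integral>u. F u \<partial>lborel)) at_top"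
    by (intro tendsto_add tail_asymptotic_half_conv_ratio_tendsto[OF F])
       (auto intro: eventually_ge_at_top eventually_gt_at_top)
  ultimately show ?thesis by (simp add: algebra_simps)
qed

lemma window_ratio_tendsto:
  assumes [measurable]: "q \<in> borel_measurable borel"
    and q: "\<And>y. 0 \<le> q y" "\<And>y. q y \<le> M" and lim: "((\<lambda>y. q y / p y) \<longlongrightarrow> a) at_top"
    and c: "0 < c"
  shows "((\<lambda>x. (\<integral>v. q v * indicator {x<..x + c} v \<partial>lborel) / p x) \<longlongrightarrow> a * c) at_top"
proof -
  obtain C where C: "0 \<le> C" "\<And>y. 0 \<le> y \<Longrightarrow> q y \<le> C * p y"
    using le_multiple_if_ratio_tendsto[OF q lim] by blast
  have "(\<integral>v. q v * indicator {x<..x + c} v \<partial>lborel) = (\<integral>t. q (x + t) * indicator {0<..c} t \<partial>lborel)"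
    for x
    using lborel_integral_real_affine[of 1 "\<lambda>v. q v * indicator {x<..x + c} v" x]
    by (simp add: indicator_def)
  moreover have "((\<lambda>x. (\<integral>t. q (x + t) * indicator {0<..c} t / p x \<partial>lborel))
      \<longlongrightarrow> (\<integral>t. a * indicator {0<..c} t \<partial>lborel)) at_top"
  proof (rule integral_dominated_convergence_at_top[where w="\<lambda>t. C * indicator {0<..c} t"])
    show "integrable lborel (\<lambda>t. C * indicator {0<..c} t :: real)"
      using c by (simp add: emeasure_lborel_Ioc)
    show "AE t in lborel. ((\<lambda>x. q (x + t) * indicator {0<..c} t / p x) \<longlongrightarrow> a * indicator {0<..c} t) at_top"
    proof (rule AE_I2)
      fix t :: real
      show "((\<lambda>x. q (x + t) * indicator {0<..c} t / p x) \<longlongrightarrow> a * indicator {0<..c} t) at_top"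
        using tendsto_mult_right[OF ratio_tendsto_shift[OF lim, of t], of "indicator {0<..c} t"]
        by (simp add: ac_simps)
    qed
    show "\<forall>\<^sub>F x in at_top. AE t in lborel. norm (q (x + t) * indicator {0<..c} t / p x) \<le> C * indicator {0<..c} t"
      using eventually_ge_at_top[of 0]
    proof eventually_elim
      case (elim x)
      show ?case
      proof (rule AE_I2)
        fix t :: real
        show "norm (q (x + t) * indicator {0<..c} t / p x) \<le> C * indicator {0<..c} t"
        proof (cases "t \<in> {0<..c}")
          case True
          have "q (x + t) \<le> C * p (x + t)" using True elim by (intro C) simp
          also have "\<dots> \<le> C * p x" using True elim C(1) by (intro mult_left_mono antimono) auto
          finally show ?thesis using True pos[OF elim] q(1)[of "x + t"] by (simp add: divide_le_eq)
        qed simp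
      qed
    qed
  qed measurable
  ultimately show ?thesis using c by simp
qed

lemma window_tail_ratio_tendsto:
  assumes [measurable]: "r \<in> borel_measurable borel"
    and r: "\<And>y. 0 \<le> r y" "integrable lborel r"
    and tail: "((\<lambda>x. (\<integral>v. r v * indicator {x/2..} v \<partial>lborel) / p x) \<longlongrightarrow> 0) at_top"
  shows "((\<lambda>x. (\<integral>v. r v * indicator {x<..x + c} v \<partial>lborel) / p x) \<longlongrightarrow> 0) at_top"
proof (rule tendsto_sandwich[where f="\<lambda>x. 0" and h="\<lambda>x. (\<integral>v. r v * indicator {x/2..} v \<partial>lborel) / p x"])
  show "\<forall>\<^sub>F x in at_top. 0 \<le> (\<integral>v. r v * indicator {x<..x + c} v \<partial>lborel) / p x"
    using eventually_ge_at_top[of 0]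
    by eventually_elim (auto intro!: divide_nonneg_pos integral_nonneg pos simp: r)
  show "\<forall>\<^sub>F x in at_top. (\<integral>v. r v * indicator {x<..x + c} v \<partial>lborel) / p x
     \<le> (\<integral>v. r v * indicator {x/2..} v \<partial>lborel) / p x"
    using eventually_ge_at_top[of 0]
  proof eventually_elim
    case (elim x)
    have r_restrict: "integrable lborel (\<lambda>v. r v * indicator A v)" if "A \<in> sets borel" for A
      using integrable_mult_indicator[OF _ r(2), of A] that by (simp add: mult.commute)
    have "(\<integral>v. r v * indicator {x<..x + c} v \<partial>lborel) \<le> (\<integral>v. r v * indicator {x/2..} v \<partial>lborel)"
      using elim by (intro integral_mono r_restrict) (auto simp: indicator_def r)
    then show ?case using pos[OF elim] by (simp add: divide_right_mono)
  qed
qed (use tail in auto)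

lemma tail_asymptotic_window_ratio_tendsto:
  assumes F: "tail_asymptotic F a" and c: "0 < c"
  shows "((\<lambda>x. (\<integral>v. F v * indicator {x<..x + c} v \<partial>lborel) / p x) \<longlongrightarrow> a * c) at_top"
proof -
  obtain q r M where F_eq: "F = (\<lambda>y. q y + r y)" and [measurable]: "q \<in> borel_measurable borel"
      "r \<in> borel_measurable borel" and qr: "\<And>y. 0 \<le> q y" "\<And>y. 0 \<le> r y" "\<And>y. q y + r y \<le> M"
    and int: "integrable lborel q" "integrable lborel r" and lim: "((\<lambda>y. q y / p y) \<longlongrightarrow> a) at_top"
    and tail: "((\<lambda>x. (\<integral>v. r v * indicator {x/2..} v \<partial>lborel) / p x) \<longlongrightarrow> 0) at_top"
    using tail_asymptoticE[OF F] by blast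
  have q_le: "q y \<le> M" for y using qr[of y] by linarith
  have "(\<integral>v. F v * indicator {x<..x + c} v \<partial>lborel) / p x
     = (\<integral>v. q v * indicator {x<..x + c} v \<partial>lborel) / p x
       + (\<integral>v. r v * indicator {x<..x + c} v \<partial>lborel) / p x" for x
    using integrable_mult_indicator[OF _ int(1), of "{x<..x + c}"]
      integrable_mult_indicator[OF _ int(2), of "{x<..x + c}"]
    by (simp add: F_eq distrib_right Bochner_Integration.integral_add add_divide_distrib mult.commute)
  moreover have "((\<lambda>x. (\<integral>v. q v * indicator {x<..x + c} v \<partial>lborel) / p x
      + (\<integral>v. r v * indicator {x<..x + c} v \<partial>lborel) / p x) \<longlongrightarrow> a * c + 0) at_top"
    by (intro tendsto_add window_ratio_tendsto[OF _ qr(1) q_le lim c]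
        window_tail_ratio_tendsto[OF _ qr(2) int(2) tail]) simp_all
  ultimately show ?thesis by simp
qed

end

section \<open>The reference density and the spikes\<close>

definition inv_sq_density :: "real \<Rightarrow> real" where
  "inv_sq_density x = (if 0 \<le> x then 1 / (1 + x)^2 else 0)"

lemma borel_measurable_inv_sq_density [measurable]: "inv_sq_density \<in> borel_measurable borel"
  unfolding inv_sq_density_def by measurable

lemma inv_sq_density_nonneg: "0 \<le> inv_sq_density x"
  by (simp add: inv_sq_density_def)

lemma inv_sq_density_le_1: "inv_sq_density x \<le> 1"
  by (auto simp: inv_sq_density_def field_simps)

lemma nn_integral_inv_sq_density: "(\<integral>\<^sup>+x. ennreal (inv_sq_density x) \<partial>lborel) = 1"
proof -
  have "(\<integral>\<^sup>+x. ennreal (inv_sq_density x) \<partial>lborel)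
      = (\<integral>\<^sup>+x. ennreal (inv_sq_density x) * indicator {0..} x \<partial>lborel)"
    by (intro nn_integral_cong) (auto simp: inv_sq_density_def indicator_def)
  also have "\<dots> = ennreal (0 - (-1 / (1 + 0)))"
  proof (rule nn_integral_FTC_atLeast)
    fix x :: real assume "0 \<le> x"
    then show "((\<lambda>x. -1 / (1 + x)) has_real_derivative inv_sq_density x) (at x)"
      by (auto intro!: derivative_eq_intros simp: power2_eq_square inv_sq_density_def)
  qed (auto simp: inv_sq_density_nonneg intro: tendsto_eq_intros, real_asymp)
  finally show ?thesis by simp
qed

lemma integrable_inv_sq_density: "integrable lborel inv_sq_density"
  by (rule integrableI_nonneg) (auto simp: inv_sq_density_nonneg nn_integral_inv_sq_density)

lemma inv_sq_density_tendsto_0: "(inv_sq_density \<longlongrightarrow> 0) at_top"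
proof -
  have "\<forall>\<^sub>F x in at_top. 1 / (1 + x)^2 = inv_sq_density x"
    using eventually_ge_at_top[of 0] by eventually_elim (simp add: inv_sq_density_def)
  moreover have "((\<lambda>x::real. 1 / (1 + x)^2) \<longlongrightarrow> 0) at_top" by real_asymp
  ultimately show ?thesis by (rule Lim_transform_eventually[rotated])
qed

interpretation inv_sq: dominated_long_tailed inv_sq_density 4
proof
  fix x y b :: real
  show "0 \<le> x \<Longrightarrow> 0 < inv_sq_density x" by (simp add: inv_sq_density_def)
  show "0 \<le> x \<Longrightarrow> x \<le> y \<Longrightarrow> inv_sq_density y \<le> inv_sq_density x"
    by (auto simp: inv_sq_density_def intro!: divide_left_mono power_mono mult_pos_pos)
  show "inv_sq_density (x / 2) \<le> 4 * inv_sq_density x" if "0 \<le> x"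
  proof -
    have "(1 + x)^2 \<le> (2 + x)^2" using that by (intro power_mono) auto
    then have "4 / (2 + x)^2 \<le> 4 / (1 + x)^2"
      using that by (intro divide_left_mono) auto
    then show ?thesis using that by (simp add: inv_sq_density_def power2_eq_square field_simps)
  qed
  have "\<forall>\<^sub>F x in at_top. (1 + x)^2 / (1 + x + b)^2 = inv_sq_density (x + b) / inv_sq_density x"
    using eventually_ge_at_top[of "max 0 (- b)"] by eventually_elim (auto simp: inv_sq_density_def)
  moreover have "((\<lambda>x. (1 + x)^2 / (1 + x + b)^2) \<longlongrightarrow> 1) at_top" by real_asymp
  ultimately show "((\<lambda>x. inv_sq_density (x + b) / inv_sq_density x) \<longlongrightarrow> 1) at_top"
    by (rule Lim_transform_eventually[rotated])
qed

definition spike :: "nat \<Rightarrow> real set" where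
  "spike n = {real n + 1 <.. real n + 1 + (1/2)^(n+1)}"

definition spikes :: "real set" where
  "spikes = (\<Union>n. spike n)"

lemma sets_spike [measurable]: "spike n \<in> sets borel"
  by (simp add: spike_def)

lemma sets_spikes [measurable]: "spikes \<in> sets borel"
  unfolding spikes_def by measurable

lemma emeasure_spike: "emeasure lborel (spike n) = ennreal ((1/2)^(n+1))"
  by (simp add: spike_def)

lemma spikes_subset: "spikes \<subseteq> {1<..}"
  by (auto simp: spikes_def spike_def)

lemma emeasure_spikes_tail: "emeasure lborel (spikes \<inter> {y..}) \<le> ennreal (4 * (1/2) powr y)"
proof -
  define N where "N = nat \<lceil>y - 2\<rceil>"
  have "spikes \<inter> {y..} \<subseteq> (\<Union>n. spike (n + N))"
  proof
    fix x assume "x \<in> spikes \<inter> {y..}"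
    then obtain m where m: "x \<in> spike m" "y \<le> x" by (auto simp: spikes_def)
    have "(1/2::real)^(m+1) \<le> 1" by (intro power_le_one) auto
    with m have "N \<le> m" unfolding N_def spike_def by simp linarith
    with m show "x \<in> (\<Union>n. spike (n + N))" by (metis UNIV_I UN_I le_add_diff_inverse2)
  qed
  then have "emeasure lborel (spikes \<inter> {y..}) \<le> emeasure lborel (\<Union>n. spike (n + N))"
    by (intro emeasure_mono) measurable
  also have "\<dots> \<le> (\<Sum>n. emeasure lborel (spike (n + N)))"
    by (rule emeasure_subadditive_countably) auto
  also have "\<dots> = (\<Sum>n. ennreal ((1/2)^(n+N+1)))"
    by (simp add: emeasure_spike add.assoc)
  also have "\<dots> = ennreal ((1/2)^N)"
  proof (rule suminf_ennreal_eq)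
    have "(\<lambda>n. (1/2::real)^(N+1) * (1/2)^n) sums ((1/2)^(N+1) * (1 / (1 - 1/2)))"
      by (intro sums_mult geometric_sums) simp
    then show "(\<lambda>n. (1/2::real)^(n+N+1)) sums ((1/2)^N)"
      by (simp add: power_add mult_ac)
  qed simp
  also have "\<dots> \<le> ennreal (4 * (1/2) powr y)"
  proof (rule ennreal_leI)
    have "(1/2::real)^N = (1/2) powr (real N)" by (simp add: powr_realpow)
    also have "\<dots> \<le> (1/2) powr (y - 2)"
      using of_nat_ceiling[of "y - 2"] unfolding N_def by (intro powr_mono') auto
    also have "\<dots> = 4 * (1/2) powr y" by (simp add: powr_diff power2_eq_square)
    finally show "(1/2::real)^N \<le> 4 * (1/2) powr y" .
  qed
  finally show ?thesis .
qed

lemma emeasure_spikes_finite: "emeasure lborel spikes < \<top>"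
proof -
  have "spikes = spikes \<inter> {0..}" using spikes_subset by auto
  then show ?thesis using emeasure_spikes_tail[of 0] by (simp add: le_less_trans)
qed

lemma integrable_indicator_spikes: "integrable lborel (indicator spikes :: real \<Rightarrow> real)"
  using emeasure_spikes_finite by (intro integrable_real_indicator) auto

lemma integral_indicator_spikes_tail:
  "(\<integral>v. indicator spikes v * indicator {y..} v \<partial>lborel) \<le> 4 * (1/2) powr y"
proof -
  have fin: "emeasure lborel (spikes \<inter> {y..}) \<noteq> \<top>"
    using emeasure_spikes_tail[of y] by (auto simp: top_unique)
  have "(\<integral>v. indicator spikes v * indicator {y..} v \<partial>lborel) = measure lborel (spikes \<inter> {y..})"
    by (simp add: indicator_inter_arith[symmetric])
  also have "\<dots> \<le> 4 * (1/2) powr y"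
    using emeasure_spikes_tail[of y] emeasure_eq_ennreal_measure[OF fin] by (simp add: ennreal_le_iff)
  finally show ?thesis .
qed

section \<open>The witness\<close>

definition spiky_const :: real where
  "spiky_const = (\<integral>x. inv_sq_density x + indicator spikes x \<partial>lborel)"

definition spiky_density :: "real \<Rightarrow> real" where
  "spiky_density x = (inv_sq_density x + indicator spikes x) / spiky_const"

definition spiky :: "real measure" where
  "spiky = density lborel spiky_density"

definition spiky_sq_density :: "real \<Rightarrow> real" where
  "spiky_sq_density = conv_fun spiky_density spiky_density"

lemma spiky_const_pos: "0 < spiky_const"
proof -
  have "spiky_const = (\<integral>x. inv_sq_density x \<partial>lborel) + measure lborel spikes"
    unfolding spiky_const_def
    by (simp add: Bochner_Integration.integral_add integrable_inv_sq_density integrable_indicator_spikes)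
  moreover have "(\<integral>x. inv_sq_density x \<partial>lborel) = 1"
    by (subst integral_eq_nn_integral) (auto simp: inv_sq_density_nonneg nn_integral_inv_sq_density)
  ultimately show ?thesis using measure_nonneg[of lborel spikes] by linarith
qed

lemma borel_measurable_spiky_density [measurable]: "spiky_density \<in> borel_measurable borel"
  unfolding spiky_density_def by measurable

lemma spiky_density_nonneg: "0 \<le> spiky_density x"
  using spiky_const_pos by (simp add: spiky_density_def inv_sq_density_nonneg)

lemma spiky_density_le: "spiky_density x \<le> 2 / spiky_const"
  using spiky_const_pos inv_sq_density_le_1[of x]
  by (simp add: spiky_density_def divide_right_mono indicator_def)

lemma spiky_density_neg: "x < 0 \<Longrightarrow> spiky_density x = 0"
  using spikes_subset by (auto simp: spiky_density_def inv_sq_density_def indicator_def)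

lemma integrable_spiky_density: "integrable lborel spiky_density"
  unfolding spiky_density_def using integrable_inv_sq_density integrable_indicator_spikes by simp

lemma integral_spiky_density: "(\<integral>x. spiky_density x \<partial>lborel) = 1"
  unfolding spiky_density_def using spiky_const_pos by (simp add: spiky_const_def)

lemma nn_integral_spiky_density: "(\<integral>\<^sup>+x. ennreal (spiky_density x) \<partial>lborel) = 1"
  using nn_integral_eq_integral[OF integrable_spiky_density] spiky_density_nonneg
    integral_spiky_density by simp

lemma tail_asymptotic_spiky_density: "inv_sq.tail_asymptotic spiky_density (1 / spiky_const)"
proof (rule inv_sq.tail_asymptoticI)
  let ?Z = spiky_const
  show "spiky_density y = inv_sq_density y / ?Z + indicator spikes y / ?Z" for y
    by (simp add: spiky_density_def add_divide_distrib)
  show "inv_sq_density y / ?Z + indicator spikes y / ?Z \<le> 2 / ?Z" for y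
    using spiky_density_le[of y] by (simp add: spiky_density_def add_divide_distrib)
  show "((\<lambda>y. inv_sq_density y / ?Z / inv_sq_density y) \<longlongrightarrow> 1 / ?Z) at_top"
  proof (rule Lim_transform_eventually[OF tendsto_const])
    show "\<forall>\<^sub>F y in at_top. 1 / ?Z = inv_sq_density y / ?Z / inv_sq_density y"
      using eventually_ge_at_top[of 0]
    proof eventually_elim
      case (elim y)
      then show ?case using inv_sq.pos[OF elim] spiky_const_pos by simp
    qed
  qed
  show "((\<lambda>x. (\<integral>v. indicator spikes v / ?Z * indicator {x/2..} v \<partial>lborel) / inv_sq_density x)
      \<longlongrightarrow> 0) at_top"
  proof (rule tendsto_sandwich[where f="\<lambda>x. 0" and h="\<lambda>x. 4 / ?Z * ((1/2) powr (x/2) * (1 + x)^2)"])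
    show "\<forall>\<^sub>F x in at_top. 0 \<le> (\<integral>v. indicator spikes v / ?Z * indicator {x/2..} v \<partial>lborel)
        / inv_sq_density x"
      using spiky_const_pos by (intro always_eventually allI divide_nonneg_nonneg integral_nonneg)
        (auto simp: inv_sq_density_nonneg)
    show "\<forall>\<^sub>F x in at_top. (\<integral>v. indicator spikes v / ?Z * indicator {x/2..} v \<partial>lborel)
        / inv_sq_density x \<le> 4 / ?Z * ((1/2) powr (x/2) * (1 + x)^2)"
      using eventually_ge_at_top[of 0]
    proof eventually_elim
      case (elim x)
      have "(\<integral>v. indicator spikes v / ?Z * indicator {x/2..} v \<partial>lborel)
          = (\<integral>v. indicator spikes v * indicator {x/2..} v \<partial>lborel) / ?Z"
        by simp
      also have "\<dots> \<le> 4 * (1/2) powr (x/2) / ?Z"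
        using integral_indicator_spikes_tail spiky_const_pos by (intro divide_right_mono) auto
      finally show ?case using elim spiky_const_pos by (simp add: inv_sq_density_def field_simps)
    qed
    have "((\<lambda>x::real. (1/2) powr (x/2) * (1 + x)^2) \<longlongrightarrow> 0) at_top" by real_asymp
    then show "((\<lambda>x. 4 / ?Z * ((1/2) powr (x/2) * (1 + x)^2)) \<longlongrightarrow> 0) at_top"
      by (rule tendsto_mult_right_zero)
  qed simp
qed (use spiky_const_pos integrable_inv_sq_density integrable_indicator_spikes
      in \<open>auto simp: inv_sq_density_nonneg\<close>)

lemma prob_space_spiky: "prob_space spiky"
  unfolding spiky_def by (rule prob_spaceI) (simp add: emeasure_density nn_integral_spiky_density)

lemma sets_spiky [simp]: "sets spiky = sets borel"
  by (simp add: spiky_def)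

lemma distribution_spiky: "distribution spiky"
  unfolding distribution_def using prob_space_spiky by simp

lemma measure_spiky: "A \<in> sets borel \<Longrightarrow> measure spiky A = (\<integral>v. spiky_density v * indicator A v \<partial>lborel)"
  unfolding spiky_def by (rule measure_density_eq_integral) (auto simp: spiky_density_nonneg)

lemma measure_spiky_negative: "measure spiky {..<0} = 0"
proof -
  have "(\<lambda>v. spiky_density v * indicator {..<0} v) = (\<lambda>v. 0)"
    by (intro ext) (auto simp: indicator_def spiky_density_neg)
  then show ?thesis by (simp add: measure_spiky)
qed

lemma spiky_density_prod_le: "spiky_density x * spiky_density u \<le> 2 / spiky_const * spiky_density u"
  by (intro mult_right_mono spiky_density_le spiky_density_nonneg)

lemma integrable_spiky_density_conv: "integrable lborel (\<lambda>u. spiky_density (x - u) * spiky_density u)"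
proof (rule Bochner_Integration.integrable_bound)
  show "integrable lborel (\<lambda>u. 2 / spiky_const * spiky_density u)"
    using integrable_spiky_density by simp
  show "AE u in lborel. norm (spiky_density (x - u) * spiky_density u) \<le> norm (2 / spiky_const * spiky_density u)"
    using spiky_density_nonneg spiky_density_prod_le spiky_const_pos by (auto simp: abs_mult)
qed measurable

lemma borel_measurable_spiky_sq_density [measurable]: "spiky_sq_density \<in> borel_measurable borel"
  unfolding spiky_sq_density_def conv_fun_def by measurable

lemma spiky_sq_density_nonneg: "0 \<le> spiky_sq_density x"
  unfolding spiky_sq_density_def conv_fun_def by (simp add: spiky_density_nonneg)

lemma spiky_sq_density_le: "spiky_sq_density x \<le> 2 / spiky_const"
proof -
  have "spiky_sq_density x \<le> (\<integral>u. 2 / spiky_const * spiky_density u \<partial>lborel)"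
    unfolding spiky_sq_density_def conv_fun_def
    using integrable_spiky_density_conv integrable_spiky_density spiky_density_prod_le
    by (intro integral_mono) auto
  then show ?thesis by (simp add: integral_spiky_density)
qed

lemma spiky_conv_spiky: "spiky \<star> spiky = density lborel spiky_sq_density"
proof -
  have "finite_measure spiky" using prob_space_spiky unfolding prob_space_def by blast
  then have "spiky \<star> spiky
      = density lborel (\<lambda>x. \<integral>\<^sup>+y. ennreal (spiky_density (x - y)) * ennreal (spiky_density y) \<partial>lborel)"
    unfolding spiky_def by (intro convolution_density) auto
  also have "\<dots> = density lborel spiky_sq_density"
  proof (rule density_cong[OF _ _ AE_I2])
    fix x
    have "(\<integral>\<^sup>+y. ennreal (spiky_density (x - y)) * ennreal (spiky_density y) \<partial>lborel)
        = (\<integral>\<^sup>+y. ennreal (spiky_density (x - y) * spiky_density y) \<partial>lborel)"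
      by (simp add: ennreal_mult spiky_density_nonneg)
    also have "\<dots> = ennreal (spiky_sq_density x)"
      unfolding spiky_sq_density_def conv_fun_def
      by (rule nn_integral_eq_integral[OF integrable_spiky_density_conv]) (simp add: spiky_density_nonneg)
    finally show "(\<integral>\<^sup>+y. ennreal (spiky_density (x - y)) * ennreal (spiky_density y) \<partial>lborel)
        = ennreal (spiky_sq_density x)" .
  qed measurable
  finally show ?thesis .
qed

lemma prob_space_spiky_conv: "prob_space (spiky \<star> spiky)"
  using prob_space_spiky by (intro prob_space_convolution) auto

lemma nn_integral_spiky_sq_density: "(\<integral>\<^sup>+x. ennreal (spiky_sq_density x) \<partial>lborel) = 1"
  using prob_space.emeasure_space_1[OF prob_space_spiky_conv]
  by (simp add: spiky_conv_spiky emeasure_density)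

lemma integrable_spiky_sq_density: "integrable lborel spiky_sq_density"
  by (rule integrableI_nonneg) (auto simp: spiky_sq_density_nonneg nn_integral_spiky_sq_density)

lemma integral_spiky_sq_density: "(\<integral>x. spiky_sq_density x \<partial>lborel) = 1"
  by (subst integral_eq_nn_integral) (auto simp: spiky_sq_density_nonneg nn_integral_spiky_sq_density)

lemma measure_spiky_conv:
  "A \<in> sets borel \<Longrightarrow> measure (spiky \<star> spiky) A = (\<integral>v. spiky_sq_density v * indicator A v \<partial>lborel)"
  unfolding spiky_conv_spiky by (rule measure_density_eq_integral) (auto simp: spiky_sq_density_nonneg)

lemma spiky_sq_density_ratio_tendsto:
  "((\<lambda>x. spiky_sq_density x / inv_sq_density x) \<longlongrightarrow> 2 / spiky_const) at_top"
  using inv_sq.tail_asymptotic_conv_ratio_tendsto[OF tail_asymptotic_spiky_density]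
  by (simp add: spiky_sq_density_def integral_spiky_density)

lemma tail_asymptotic_spiky_sq_density: "inv_sq.tail_asymptotic spiky_sq_density (2 / spiky_const)"
  by (rule inv_sq.tail_asymptoticI[where r="\<lambda>_. 0" and M="2 / spiky_const"])
    (use spiky_sq_density_ratio_tendsto integrable_spiky_sq_density in
      \<open>auto simp: spiky_sq_density_nonneg spiky_sq_density_le\<close>)

lemma spiky_window_ratio_tendsto:
  "0 < c \<Longrightarrow> ((\<lambda>x. measure spiky {x<..x + c} / inv_sq_density x) \<longlongrightarrow> 1 / spiky_const * c) at_top"
  using inv_sq.tail_asymptotic_window_ratio_tendsto[OF tail_asymptotic_spiky_density]
  by (simp add: measure_spiky)

lemma spiky_conv_window_ratio_tendsto:
  "0 < c \<Longrightarrow> ((\<lambda>x. measure (spiky \<star> spiky) {x<..x + c} / inv_sq_density x) \<longlongrightarrow> 2 / spiky_const * c) at_top"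
  using inv_sq.tail_asymptotic_window_ratio_tendsto[OF tail_asymptotic_spiky_sq_density]
  by (simp add: measure_spiky_conv)

lemma spiky_in_S_loc: "spiky \<in> S_loc"
  unfolding S_loc_def S_Delta_def L_Delta_def
proof (intro CollectI allI impI conjI distribution_spiky)
  fix c :: real assume c: "0 < c"
  have "finite_measure spiky" using prob_space_spiky unfolding prob_space_def by blast
  then show "(\<lambda>x. measure spiky {x<..x + c}) \<in> classL"
    using c spiky_const_pos
    by (intro inv_sq.classL_if_ratio_tendsto[OF _ _ spiky_window_ratio_tendsto[OF c]]
        borel_measurable_measure_Ioc_window) auto
  show "(\<lambda>x. measure (spiky \<star> spiky) {x<..x + c}) \<sim>[at_top] (\<lambda>x. 2 * measure spiky {x<..x + c})"
    using c spiky_const_pos spiky_conv_window_ratio_tendsto[OF c] spiky_window_ratio_tendsto[OF c]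
    by (intro asymp_equiv_double_if_ratios_tendsto) auto
qed

lemma spiky_sq_density_in_Sd: "spiky_sq_density \<in> Sd"
  unfolding Sd_def Ld_def density_fun_def
proof (intro CollectI conjI allI)
  show "spiky_sq_density \<in> classL"
    using spiky_const_pos
    by (intro inv_sq.classL_if_ratio_tendsto[OF _ spiky_sq_density_nonneg spiky_sq_density_ratio_tendsto])
      auto
  show "conv_fun spiky_sq_density spiky_sq_density \<sim>[at_top] (\<lambda>x. 2 * spiky_sq_density x)"
    using spiky_const_pos spiky_sq_density_ratio_tendsto
      inv_sq.tail_asymptotic_conv_ratio_tendsto[OF tail_asymptotic_spiky_sq_density]
    by (intro asymp_equiv_double_if_ratios_tendsto) (auto simp: integral_spiky_sq_density)
qed (simp_all add: spiky_sq_density_nonneg nn_integral_spiky_sq_density)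

lemma spiky_conv_in_S_ac: "(spiky \<star> spiky) \<in> S_ac"
  unfolding S_ac_def distribution_def
  using prob_space_spiky_conv spiky_sq_density_in_Sd spiky_conv_spiky by auto

lemma measure_spiky_spike: "(1/2)^(n+1) / spiky_const \<le> measure spiky (spike n)"
proof -
  have "(\<integral>v. 1 / spiky_const * indicator (spike n) v \<partial>lborel)
      \<le> (\<integral>v. spiky_density v * indicator (spike n) v \<partial>lborel)"
  proof (rule integral_mono)
    show "integrable lborel (\<lambda>v. 1 / spiky_const * indicator (spike n) v :: real)"
      by (simp add: emeasure_spike)
    show "integrable lborel (\<lambda>v. spiky_density v * indicator (spike n) v)"
      using integrable_mult_indicator[OF _ integrable_spiky_density, of "spike n"]
      by (simp add: mult.commute)
    show "1 / spiky_const * indicator (spike n) v \<le> spiky_density v * indicator (spike n) v" for v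
      using spiky_const_pos inv_sq_density_nonneg[of v]
      by (auto simp: indicator_def spiky_density_def spikes_def divide_right_mono)
  qed
  moreover have "measure lborel (spike n) = (1/2)^(n+1)" by (simp add: spike_def)
  ultimately show ?thesis by (simp add: measure_spiky[OF sets_spike])
qed

lemma spiky_window_tendsto_0: "((\<lambda>x. measure spiky {x<..x + 1}) \<longlongrightarrow> 0) at_top"
proof -
  have "((\<lambda>x. measure spiky {x<..x + 1} / inv_sq_density x * inv_sq_density x)
      \<longlongrightarrow> 1 / spiky_const * 1 * 0) at_top"
    by (intro tendsto_mult spiky_window_ratio_tendsto inv_sq_density_tendsto_0) simp
  moreover have "\<forall>\<^sub>F x in at_top.
      measure spiky {x<..x + 1} / inv_sq_density x * inv_sq_density x = measure spiky {x<..x + 1}"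
    using eventually_ge_at_top[of 0]
  proof eventually_elim
    case (elim x)
    then show ?case using inv_sq.pos[OF elim] by simp
  qed
  ultimately show ?thesis by (simp add: Lim_transform_eventually)
qed

lemma spiky_not_in_US_loc: "spiky \<notin> US_loc"
proof
  assume "spiky \<in> US_loc"
  then obtain p where "unif_local_asymp spiky p" unfolding US_loc_def by auto
  obtain X where X: "\<And>x c. X \<le> x \<Longrightarrow> c \<in> {0<..1} \<Longrightarrow>
      measure spiky {x - c<..x} / c < 3 * measure spiky {x - 1<..x}"
    using unif_local_asymp_imp_window_ratio_bound[OF \<open>unif_local_asymp spiky p\<close>]
    unfolding eventually_at_top_linorder by blast
  obtain Y where Y: "\<And>y. Y \<le> y \<Longrightarrow> measure spiky {y<..y + 1} < 1 / (3 * spiky_const)"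
    using order_tendstoD(2)[OF spiky_window_tendsto_0, of "1 / (3 * spiky_const)"] spiky_const_pos
    by (auto simp: eventually_at_top_linorder)
  \<comment> \<open>the right end point \<open>x\<close> of a far-out spike \<open>(x - w, x]\<close>\<close>
  define n where "n = nat \<lceil>max X Y\<rceil>"
  define w :: real where "w = (1/2)^(n+1)"
  define x where "x = real n + 1 + w"
  have n: "X \<le> real n" "Y \<le> real n" unfolding n_def by linarith+
  have w: "0 < w" "w \<le> 1" unfolding w_def by (simp, intro power_le_one) auto
  have spike_n: "{x - w<..x} = spike n" unfolding x_def w_def spike_def by simp
  have "1 / spiky_const \<le> measure spiky {x - w<..x} / w"
    using measure_spiky_spike[of n] w spiky_const_pos unfolding spike_n w_def[symmetric]
    by (simp add: field_simps)
  also have "\<dots> < 3 * measure spiky {x - 1<..x}"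
    using n w by (intro X) (auto simp: x_def)
  also have "\<dots> < 1 / spiky_const"
    using Y[of "x - 1"] n w spiky_const_pos by (simp add: x_def field_simps)
  finally have "1 / spiky_const < 1 / spiky_const" .
  then show False by simp
qed

theorem theorem1p1:
  shows "\<exists>\<mu>. distribution \<mu> \<and> measure \<mu> {..<0} = 0 \<and>
           \<mu> \<in> S_loc - US_loc \<and> (\<mu> \<star> \<mu>) \<in> S_ac"
  using distribution_spiky measure_spiky_negative spiky_in_S_loc spiky_not_in_US_loc
    spiky_conv_in_S_ac by blast

end
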